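(* Let $\mathcal{M}\subseteq\mathbb{S}^n$ be any set. The following are equivalent: (1) $\mathcal{S}(\mathcal{M})$ is rank-one generated; (2) every face of $\mathcal{S}(\mathcal{M})$ is rank-one generated; (3) $\mathcal{S}(\mathcal{M})\cap\mathcal{T}(\mathcal{M}')$ is rank-one generated for every $\mathcal{M}'\subseteq\mathcal{M}$.
   Context: $\mathbb{S}^n$ denotes real symmetric $n\times n$ matrices with $\langle A,B\rangle=\mathrm{tr}(AB)$, $\mathbb{S}^n_+$ the PSD cone. For $\mathcal{M}\subseteq\mathbb{S}^n$, $\mathcal{S}(\mathcal{M})=\{X\in\mathbb{S}^n_+:\langle M,X\rangle\ge0\ \forall M\in\mathcal{M}\}$ and $\mathcal{T}(\mathcal{M})=\{X\in\mathbb{S}^n_+:\langle M,X\rangle=0\ \forall M\in\mathcal{M}\}$ (so $\mathcal{T}(\emptyset)=\mathbb{S}^n_+$). A closed convex cone $\mathcal{S}\subseteq\mathbb{S}^n_+$ is rank-one generated (ROG) if $\mathcal{S}=\mathrm{conv}(\mathcal{S}\cap\{xx^\top:x\in\mathbb{R}^n\})$. *)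

theory Defs
  imports "HOL-Analysis.Analysis"
begin

definition sym_mat :: "real^'n^'n \<Rightarrow> bool" where
  "sym_mat A \<longleftrightarrow> transpose A = A"

definition frob :: "real^'n^'n \<Rightarrow> real^'n^'n \<Rightarrow> real" where
  "frob A B = trace (A ** B)"

definition psd_cone :: "(real^'n^'n) set" where
  "psd_cone = {X. sym_mat X \<and> (\<forall>x. x \<bullet> (X *v x) \<ge> 0)}"

definition outer :: "real^'n \<Rightarrow> real^'n^'n" where
  "outer x = (\<chi> i j. x $ i * x $ j)"

definition S_cone :: "(real^'n^'n) set \<Rightarrow> (real^'n^'n) set" where
  "S_cone \<M> = {X \<in> psd_cone. \<forall>M\<in>\<M>. frob M X \<ge> 0}"

definition T_cone :: "(real^'n^'n) set \<Rightarrow> (real^'n^'n) set" where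
  "T_cone \<M> = {X \<in> psd_cone. \<forall>M\<in>\<M>. frob M X = 0}"

definition ROG :: "(real^'n^'n) set \<Rightarrow> bool" where
  "ROG K \<longleftrightarrow> closed K \<and> convex K \<and> cone K \<and> K \<subseteq> psd_cone \<and>
     K = convex hull (K \<inter> range outer)"

end

(* Faces of a convex hull conv C are again convex hulls of points of C (Caratheodory reduces this
   to polytopes), so every face of a rank-one generated cone is rank-one generated. Conversely
   S(M) is a face of itself, and S(M) \<inter> T(M') is a face of S(M) because each M \<in> M' is
   nonnegative on S(M), so {X. <M, X> = 0} is a supporting hyperplane; taking M' = {} gives S(M). *)

theory Submission
  imports Defs
begin

lemma frob_eq_inner: "frob A B = transpose A \<bullet> B"
  unfolding frob_def trace_def matrix_matrix_mult_def transpose_def inner_vec_def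
  by simp (rule sum.swap)

lemma inner_mult_vec_eq_inner_outer: "x \<bullet> (X *v x) = outer x \<bullet> X"
  unfolding outer_def matrix_vector_mult_def inner_vec_def
  by (simp add: sum_distrib_left algebra_simps)

lemma convex_sym_mat: "convex {X :: real^'n^'n. sym_mat X}"
  unfolding convex_def sym_mat_def transpose_def
  by (simp add: vec_eq_iff)

lemma psd_cone_eq_Int_halfspaces:
  "psd_cone = {X. sym_mat X} \<inter> (\<Inter>x. {X. outer x \<bullet> X \<ge> 0})"
  unfolding psd_cone_def by (auto simp: inner_mult_vec_eq_inner_outer)

lemma convex_psd_cone: "convex psd_cone"
  unfolding psd_cone_eq_Int_halfspaces
  by (intro convex_Int convex_sym_mat convex_INT convex_halfspace_ge)

lemma convex_S_cone: "convex (S_cone \<M>)"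
proof -
  have "S_cone \<M> = psd_cone \<inter> (\<Inter>M\<in>\<M>. {X. transpose M \<bullet> X \<ge> 0})"
    unfolding S_cone_def by (auto simp: frob_eq_inner)
  then show ?thesis
    by (simp add: convex_Int convex_psd_cone convex_INT convex_halfspace_ge)
qed

lemma S_cone_Int_T_cone_face_of:
  assumes "\<M>' \<subseteq> \<M>"
  shows "S_cone \<M> \<inter> T_cone \<M>' face_of S_cone \<M>"
proof -
  define H where "H M = S_cone \<M> \<inter> {X. transpose M \<bullet> X = 0}" for M
  have "H M face_of S_cone \<M>" if "M \<in> \<M>'" for M
    unfolding H_def using that assms
    by (intro face_of_Int_supporting_hyperplane_ge convex_S_cone)
      (auto simp: S_cone_def frob_eq_inner)
  \<comment> \<open>\<open>S_cone \<M>\<close> is included so that the family stays nonempty when \<open>\<M>' = {}\<close>\<close>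
  then have "\<Inter>(insert (S_cone \<M>) (H ` \<M>')) face_of S_cone \<M>"
    by (intro face_of_Inter) (auto intro: face_of_refl convex_S_cone)
  moreover have "\<Inter>(insert (S_cone \<M>) (H ` \<M>')) = S_cone \<M> \<inter> T_cone \<M>'"
    unfolding H_def S_cone_def T_cone_def by (auto simp: frob_eq_inner)
  ultimately show ?thesis by simp
qed

lemma face_of_convex_hull_eq_convex_hull_Int:
  fixes C :: "'a::euclidean_space set"
  assumes F: "F face_of convex hull C"
  shows "F = convex hull (F \<inter> C)"
proof
  show "F \<subseteq> convex hull (F \<inter> C)"
  proof
    fix x assume "x \<in> F"
    then have "x \<in> convex hull C" using F face_of_imp_subset by blast
    then obtain T where T: "finite T" "T \<subseteq> C" "x \<in> convex hull T"
      unfolding caratheodory[of C] by blast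
    have "convex hull T \<subseteq> convex hull C" using T(2) by (rule hull_mono)
    then have "F \<inter> convex hull T face_of convex hull T"
      using face_of_slice[OF F convex_convex_hull, of T] by (simp add: Int_absorb1)
    then obtain T' where T': "T' \<subseteq> T" "F \<inter> convex hull T = convex hull T'"
      using face_of_convex_hull_subset finite_imp_compact[OF T(1)] by metis
    have "T' \<subseteq> F \<inter> C"
      using T' T(2) hull_subset[of T'] by blast
    then show "x \<in> convex hull (F \<inter> C)"
      using T' \<open>x \<in> F\<close> T(3) hull_mono by blast
  qed
  show "convex hull (F \<inter> C) \<subseteq> F"
    by (intro hull_minimal) (auto intro: face_of_imp_convex[OF F])
qed

lemma ROG_face_of:
  assumes "ROG K" and F: "F face_of K"
  shows "ROG F"
proof -
  have K: "closed K" "convex K" "cone K" "K \<subseteq> psd_cone" "K = convex hull (K \<inter> range outer)"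
    using \<open>ROG K\<close> unfolding ROG_def by blast+
  have "F face_of convex hull (K \<inter> range outer)"
    using F by (simp only: K(5)[symmetric])
  then have "F = convex hull (F \<inter> (K \<inter> range outer))"
    by (rule face_of_convex_hull_eq_convex_hull_Int)
  also have "F \<inter> (K \<inter> range outer) = F \<inter> range outer"
    using F face_of_imp_subset by blast
  finally have "F = convex hull (F \<inter> range outer)" .
  moreover have "cone F"
    using face_of_conic[OF _ F] K(3) by (simp add: cone_def conic_def)
  moreover have "closed F" "convex F" "F \<subseteq> psd_cone"
    using face_of_imp_closed[OF K(2,1) F] face_of_imp_convex[OF F]
      face_of_imp_subset[OF F] K(4) by auto
  ultimately show ?thesis
    unfolding ROG_def by (intro conjI) assumption+
qed

theorem lemma2p10:
  fixes \<M> :: "(real^'n^'n) set"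
  assumes "\<forall>M\<in>\<M>. sym_mat M"
  shows "(ROG (S_cone \<M>) \<longleftrightarrow> (\<forall>F. F face_of S_cone \<M> \<longrightarrow> ROG F))
       \<and> (ROG (S_cone \<M>) \<longleftrightarrow> (\<forall>\<M>'. \<M>' \<subseteq> \<M> \<longrightarrow> ROG (S_cone \<M> \<inter> T_cone \<M>')))"
proof -
  have S_face: "S_cone \<M> face_of S_cone \<M>"
    by (rule face_of_refl[OF convex_S_cone])
  have T_empty: "S_cone \<M> \<inter> T_cone {} = S_cone \<M>"
    unfolding S_cone_def T_cone_def by auto
  show ?thesis
  proof (intro conjI iffI allI impI)
    fix F assume "ROG (S_cone \<M>)" "F face_of S_cone \<M>"
    then show "ROG F" by (rule ROG_face_of)
  next
    assume "\<forall>F. F face_of S_cone \<M> \<longrightarrow> ROG F"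
    then show "ROG (S_cone \<M>)" using S_face by blast
  next
    fix \<M>' assume "ROG (S_cone \<M>)" "\<M>' \<subseteq> \<M>"
    then show "ROG (S_cone \<M> \<inter> T_cone \<M>')"
      using ROG_face_of S_cone_Int_T_cone_face_of by blast
  next
    assume "\<forall>\<M>'. \<M>' \<subseteq> \<M> \<longrightarrow> ROG (S_cone \<M> \<inter> T_cone \<M>')"
    then show "ROG (S_cone \<M>)" using T_empty by (metis empty_subsetI)
  qed
qed

end
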